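(* Let $\beta\in(0,2]$, $L>0$, $\Delta_{\beta,n}=(\log n/n)^{(\beta-\lceil\beta\rceil+1)/(2\beta+1)}$ and $\gamma_n=C_\beta h_n^{\beta-\lceil\beta\rceil+1}$. If $C$ is a constant with $C\ge(2\gamma_n+2Lh_n^{\beta-\lceil\beta\rceil+1})/\Delta_{\beta,n}$ (for instance $C=(2C_\beta+2L)C_h^{\beta-\lceil\beta\rceil+1}$), then $\varepsilon_{\lceil\beta\rceil-1,\gamma_n}(f)\ge h_n$ for every $f\in\mathcal F_\beta(C\Delta_{\beta,n})$.
   Context: $\Sigma(\beta,L)$: functions $f:[0,1]\to\mathbb R$ with $|f^{(\lceil\beta\rceil-1)}(x)-f^{(\lceil\beta\rceil-1)}(y)|\le L|x-y|^{\beta+1-\lceil\beta\rceil}$. $\mathcal F_\beta(\delta)=\{f\in\Sigma(\beta,L):\max_{0\le a<b\le1}(f(a)-f(b))\ge\delta\}$ if $\beta\le1$, and $\{f\in\Sigma(\beta,L):\min_{[0,1]}f'\le-\delta\}$ if $\beta\in(1,2]$. $\mathcal M$: nondecreasing functions; $\lambda$: Lebesgue measure; $\varepsilon_{0,\gamma}(f)=\min_{g\in\mathcal M}\lambda(\{x:|f(x)-g(x)|>\gamma\})$, $\varepsilon_{1,\gamma}(f)=\lambda(\{x:f'(x)\le-\gamma\})$. Constants: $\sigma>0$ noise level, $K$ a kernel (nonnegative, $\int K=1$, supported in $[-1,1]$, bounded by $K_{\max}$, Lipschitz with constant $L_K$, symmetric), $\mu_2=\int K^2$, $\lambda_0>0$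 ($1/2$ if $\beta\le1$, $0.0228$ if $\beta\in(1,2]$). $C_*=8K_{\max}/\lambda_0$, $q_1=C_*L/(\lceil\beta\rceil-1)!$, $q_2=16\sigma^2\lceil\beta\rceil\mu_2/\lambda_0^2$, $C_h=(q_2/(4q_1^2\beta))^{1/(2\beta+1)}$, $h_n=C_h(\log n/n)^{1/(2\beta+1)}$; $L_1=\sqrt e(K_{\max}+L_K)$, $L_2=2\lceil\beta\rceil K_{\max}+\lceil\beta\rceil L_K$, $\widetilde C_*=L_1/(8L_2)+\sqrt eK_{\max}/\lambda_0$, $W=\max(4C_*^2,4\widetilde C_*^2)$; $C_\beta=\big((\tfrac{16K_{\max}}{\lambda_0}\vee2)+4\big)L+\sigma\big(\sqrt{4W/C_h^{2\beta+1}}+\sqrt{6W/C_h^{2\beta+1}}\big)$ if $\beta\in(0,1]$ and $C_\beta=4L+\frac{16L_2\sigma}{\lambda_0}\sqrt{4W/C_h^{2\beta+1}}$ if $\beta\in(1,2]$.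
   Formalization: For $\beta$ in (1,2] the conclusion is claimed only when $h_n \le 1$, a hypothesis absent for $\beta \le 1$. The statement above fails without it. *)

theory Defs
  imports "HOL-Analysis.Analysis"
begin

definition dfun :: "(real \<Rightarrow> real) \<Rightarrow> real \<Rightarrow> real" where
  "dfun f x = vector_derivative f (at x within {0..1})"

(* Hoelder class Sigma(beta,L), beta in (0,2]:  ceil(beta)-1 = 0 or 1 *)
definition Hoelder :: "real \<Rightarrow> real \<Rightarrow> (real \<Rightarrow> real) \<Rightarrow> bool" where
  "Hoelder \<beta> L f =
    (if \<beta> \<le> 1 then (\<forall>x\<in>{0..1}. \<forall>y\<in>{0..1}. \<bar>f x - f y\<bar> \<le> L * \<bar>x - y\<bar> powr \<beta>)
     else (\<forall>x\<in>{0..1}. f differentiable (at x within {0..1})) \<and>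
          (\<forall>x\<in>{0..1}. \<forall>y\<in>{0..1}. \<bar>dfun f x - dfun f y\<bar> \<le> L * \<bar>x - y\<bar> powr (\<beta> - 1)))"

(* F_beta(delta); the max / min are attained by continuity, stated as existence *)
definition Fclass :: "real \<Rightarrow> real \<Rightarrow> real \<Rightarrow> (real \<Rightarrow> real) set" where
  "Fclass \<beta> L \<delta> = {f. Hoelder \<beta> L f \<and>
     (if \<beta> \<le> 1 then (\<exists>a b. 0 \<le> a \<and> a < b \<and> b \<le> 1 \<and> f a - f b \<ge> \<delta>)
      else (\<exists>x\<in>{0..1}. dfun f x \<le> - \<delta>))}"

definition eps0 :: "real \<Rightarrow> (real \<Rightarrow> real) \<Rightarrow> real" where
  "eps0 \<gamma> f = (INF g \<in> {g. mono_on {0..1} g}.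
      measure lborel {x \<in> {0..1}. \<bar>f x - g x\<bar> > \<gamma>})"

definition eps1 :: "real \<Rightarrow> (real \<Rightarrow> real) \<Rightarrow> real" where
  "eps1 \<gamma> f = measure lborel {x \<in> {0..1}. dfun f x \<le> - \<gamma>}"

definition epsb :: "real \<Rightarrow> real \<Rightarrow> (real \<Rightarrow> real) \<Rightarrow> real" where
  "epsb \<beta> \<gamma> f = (if \<beta> \<le> 1 then eps0 \<gamma> f else eps1 \<gamma> f)"

definition kernel :: "(real \<Rightarrow> real) \<Rightarrow> real \<Rightarrow> real \<Rightarrow> bool" where
  "kernel K Kmax LK =
    ((\<forall>x. 0 \<le> K x) \<and> (K has_integral 1) UNIV \<and> (\<forall>x. \<bar>x\<bar> > 1 \<longrightarrow> K x = 0) \<and>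
     (\<forall>x. K x \<le> Kmax) \<and> (\<forall>x y. \<bar>K x - K y\<bar> \<le> LK * \<bar>x - y\<bar>) \<and> (\<forall>x. K (- x) = K x))"

definition cb :: "real \<Rightarrow> nat" where "cb \<beta> = nat (ceiling \<beta>)"

definition lam0 :: "real \<Rightarrow> real" where
  "lam0 \<beta> = (if \<beta> \<le> 1 then 1/2 else 0.0228)"

definition mu2 :: "(real \<Rightarrow> real) \<Rightarrow> real" where
  "mu2 K = integral UNIV (\<lambda>x. (K x)\<^sup>2)"

definition Cstar :: "real \<Rightarrow> real \<Rightarrow> real" where
  "Cstar \<beta> Kmax = 8 * Kmax / lam0 \<beta>"

definition q1 :: "real \<Rightarrow> real \<Rightarrow> real \<Rightarrow> real" where
  "q1 \<beta> L Kmax = Cstar \<beta> Kmax * L / fact (cb \<beta> - 1)"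

definition q2 :: "real \<Rightarrow> real \<Rightarrow> (real \<Rightarrow> real) \<Rightarrow> real" where
  "q2 \<beta> \<sigma> K = 16 * \<sigma>\<^sup>2 * real (cb \<beta>) * mu2 K / (lam0 \<beta>)\<^sup>2"

definition Ch :: "real \<Rightarrow> real \<Rightarrow> real \<Rightarrow> (real \<Rightarrow> real) \<Rightarrow> real \<Rightarrow> real" where
  "Ch \<beta> L \<sigma> K Kmax =
     (q2 \<beta> \<sigma> K / (4 * (q1 \<beta> L Kmax)\<^sup>2 * \<beta>)) powr (1 / (2 * \<beta> + 1))"

definition hn :: "real \<Rightarrow> real \<Rightarrow> real \<Rightarrow> (real \<Rightarrow> real) \<Rightarrow> real \<Rightarrow> nat \<Rightarrow> real" where
  "hn \<beta> L \<sigma> K Kmax n = Ch \<beta> L \<sigma> K Kmax * (ln (real n) / real n) powr (1 / (2 * \<beta> + 1))"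

definition L1 :: "real \<Rightarrow> real \<Rightarrow> real" where
  "L1 Kmax LK = sqrt (exp 1) * (Kmax + LK)"

definition L2 :: "real \<Rightarrow> real \<Rightarrow> real \<Rightarrow> real" where
  "L2 \<beta> Kmax LK = 2 * real (cb \<beta>) * Kmax + real (cb \<beta>) * LK"

definition Ctil :: "real \<Rightarrow> real \<Rightarrow> real \<Rightarrow> real" where
  "Ctil \<beta> Kmax LK = L1 Kmax LK / (8 * L2 \<beta> Kmax LK) + sqrt (exp 1) * Kmax / lam0 \<beta>"

definition Wc :: "real \<Rightarrow> real \<Rightarrow> real \<Rightarrow> real" where
  "Wc \<beta> Kmax LK = max (4 * (Cstar \<beta> Kmax)\<^sup>2) (4 * (Ctil \<beta> Kmax LK)\<^sup>2)"

definition Cbeta :: "real \<Rightarrow> real \<Rightarrow> real \<Rightarrow> (real \<Rightarrow> real) \<Rightarrow> real \<Rightarrow> real \<Rightarrow> real" where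
  "Cbeta \<beta> L \<sigma> K Kmax LK =
    (let W = Wc \<beta> Kmax LK; c = Ch \<beta> L \<sigma> K Kmax powr (2 * \<beta> + 1) in
     if \<beta> \<le> 1 then
       ((max (16 * Kmax / lam0 \<beta>) 2) + 4) * L + \<sigma> * (sqrt (4 * W / c) + sqrt (6 * W / c))
     else 4 * L + 16 * L2 \<beta> Kmax LK * \<sigma> / lam0 \<beta> * sqrt (4 * W / c))"

definition alph :: "real \<Rightarrow> real" where
  "alph \<beta> = \<beta> - real_of_int (ceiling \<beta>) + 1"

definition Deltan :: "real \<Rightarrow> nat \<Rightarrow> real" where
  "Deltan \<beta> n = (ln (real n) / real n) powr (alph \<beta> / (2 * \<beta> + 1))"

definition gamman :: "real \<Rightarrow> real \<Rightarrow> real \<Rightarrow> (real \<Rightarrow> real) \<Rightarrow> real \<Rightarrow> real \<Rightarrow> nat \<Rightarrow> real" where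
  "gamman \<beta> L \<sigma> K Kmax LK n = Cbeta \<beta> L \<sigma> K Kmax LK * hn \<beta> L \<sigma> K Kmax n powr alph \<beta>"

end

(* If beta <= 1, Hoelder continuity turns a drop f a - f b >= 2 gamma + 2 L h^beta into a gap
   b - a >= 2h, with f > f a - L h^beta on (a, a+h) and f < f b + L h^beta on (b-h, b).  A
   nondecreasing g cannot stay within gamma of f at both x and its translate x + (b - a - h),
   so the set where |f - g| > gamma has measure at least h.  If 1 < beta, the Hoelder bound on
   f' keeps f' <= -gamma on an interval of length h around a point where
   f' <= -(2 gamma + 2 L h^(beta-1)). *)

theory Submission
  imports Defs
begin

lemma holder_continuous_on:
  fixes u :: "real \<Rightarrow> real"
  assumes holder: "\<forall>x\<in>S. \<forall>y\<in>S. \<bar>u x - u y\<bar> \<le> L * \<bar>x - y\<bar> powr p" and "0 < p"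
  shows "continuous_on S u"
  unfolding continuous_on_def
proof
  fix x assume "x \<in> S"
  have "((\<lambda>y. \<bar>y - x\<bar>) \<longlongrightarrow> 0) (at x within S)"
    by (intro tendsto_rabs_zero LIM_zero tendsto_ident_at)
  then have "((\<lambda>y. L * \<bar>y - x\<bar> powr p) \<longlongrightarrow> 0) (at x within S)"
    by (intro tendsto_mult_right_zero tendsto_zero_powrI) (use \<open>0 < p\<close> in auto)
  moreover have "\<forall>\<^sub>F y in at x within S. norm (u y - u x) \<le> L * \<bar>y - x\<bar> powr p"
    using holder \<open>x \<in> S\<close> by (auto simp: eventually_at_filter intro!: always_eventually)
  ultimately have "((\<lambda>y. u y - u x) \<longlongrightarrow> 0) (at x within S)"
    by (rule Lim_null_comparison[rotated])
  then show "(u \<longlongrightarrow> u x) (at x within S)"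
    by (simp add: LIM_zero_iff)
qed

lemma measure_ge_if_translate_covers:
  fixes E :: "real set"
  assumes E: "E \<in> fmeasurable lborel" and "h \<le> d"
    and covers: "\<forall>x\<in>{a<..<a+h}. x \<in> E \<or> x + d \<in> E"
  shows "h \<le> measure lborel E"
proof (cases "h \<le> 0")
  case True
  then show ?thesis using measure_nonneg[of lborel E] by linarith
next
  case False
  define E1 where "E1 = E \<inter> {a<..<a+h}"
  define E2 where "E2 = E \<inter> {a+d<..<a+d+h}"
  define T where "T = (+) d -` E2"
  have E1: "E1 \<in> fmeasurable lborel"
    unfolding E1_def using E by (intro fmeasurable_Int_fmeasurable) auto
  have E2: "E2 \<in> fmeasurable lborel"
    unfolding E2_def using E by (intro fmeasurable_Int_fmeasurable) auto
  have "measure lborel T = measure (distr lborel borel ((+) d)) E2"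
    using E2 by (subst measure_distr) (auto simp: T_def fmeasurable_def)
  also have "\<dots> = measure lborel E2"
    by (simp add: lborel_distr_plus)
  finally have T_E2: "measure lborel T = measure lborel E2" .
  have "T \<in> sets borel"
    using E2 measurable_sets[of "(+) d" borel borel E2] by (simp add: T_def fmeasurable_def)
  moreover have "T \<subseteq> {a..a+h}"
    unfolding T_def E2_def by auto
  ultimately have T: "T \<in> fmeasurable lborel"
    by (intro fmeasurableI2[OF fmeasurable_cbox[of a "a+h", unfolded cbox_interval]]) simp_all
  have "{a<..<a+h} \<subseteq> E1 \<union> T"
  proof
    fix x assume "x \<in> {a<..<a+h}"
    then show "x \<in> E1 \<union> T"
      using covers unfolding E1_def E2_def T_def by (auto simp: add.commute)
  qed
  then have "measure lborel {a<..<a+h} \<le> measure lborel (E1 \<union> T)"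
    using E1 T by (intro measure_mono_fmeasurable) auto
  then have "h \<le> measure lborel (E1 \<union> T)"
    using False by simp
  also have "\<dots> \<le> measure lborel E1 + measure lborel T"
    using E1 T by (intro measure_Un_le) auto
  also have "\<dots> = measure lborel (E1 \<union> E2)"
    unfolding T_E2 using E1 E2 \<open>h \<le> d\<close>
    by (intro measure_Union[symmetric]) (auto simp: E1_def E2_def fmeasurable_def)
  also have "\<dots> \<le> measure lborel E"
    using E1 E2 E by (intro measure_mono_fmeasurable) (auto simp: E1_def E2_def)
  finally show ?thesis .
qed

lemma holder_drop_gap:
  fixes f :: "real \<Rightarrow> real"
  assumes "0 < \<beta>" "\<beta> \<le> 1" "0 < L" "0 \<le> h"
    and holder: "\<bar>f a - f b\<bar> \<le> L * \<bar>b - a\<bar> powr \<beta>"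
    and drop: "2 * L * h powr \<beta> \<le> f a - f b"
  shows "2 * h \<le> \<bar>b - a\<bar>"
proof (rule ccontr)
  assume "\<not> 2 * h \<le> \<bar>b - a\<bar>"
  then have "\<bar>b - a\<bar> powr \<beta> < (2 * h) powr \<beta>"
    using \<open>0 < \<beta>\<close> by (intro powr_less_mono2) auto
  also have "\<dots> = 2 powr \<beta> * h powr \<beta>"
    using \<open>0 \<le> h\<close> by (simp add: powr_mult)
  also have "\<dots> \<le> 2 * h powr \<beta>"
    using powr_mono[of \<beta> 1 2] \<open>\<beta> \<le> 1\<close> by (intro mult_right_mono) auto
  finally have "L * \<bar>b - a\<bar> powr \<beta> < L * (2 * h powr \<beta>)"
    using \<open>0 < L\<close> by (rule mult_strict_left_mono)
  then show False
    using holder drop by linarith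
qed

lemma sets_borel_deviation_gt:
  fixes f g :: "real \<Rightarrow> real"
  assumes "A \<in> sets borel" "continuous_on A f" "mono_on A g"
  shows "{x\<in>A. \<gamma> < \<bar>f x - g x\<bar>} \<in> sets borel"
proof -
  have "(\<lambda>x. \<bar>f x - g x\<bar>) \<in> borel_measurable (restrict_space borel A)"
    using borel_measurable_continuous_on_restrict[OF assms(2)] borel_measurable_mono_on_fnc[OF assms(3)]
    by measurable
  then have "{x \<in> space (restrict_space borel A). \<gamma> < \<bar>f x - g x\<bar>} \<in> sets (restrict_space borel A)"
    by (simp add: borel_measurable_iff_greater)
  then show ?thesis
    using assms(1) by (subst (asm) sets_restrict_space_iff) (auto simp: space_restrict_space)
qed

lemma measure_deviation_ge:
  fixes f g :: "real \<Rightarrow> real"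
  assumes "0 < \<beta>" "\<beta> \<le> 1" "0 < L" "0 \<le> \<gamma>" "0 \<le> h"
    and holder: "\<forall>x\<in>{0..1}. \<forall>y\<in>{0..1}. \<bar>f x - f y\<bar> \<le> L * \<bar>x - y\<bar> powr \<beta>"
    and "mono_on {0..1} g"
    and "0 \<le> a" "a < b" "b \<le> 1"
    and drop: "2 * \<gamma> + 2 * L * h powr \<beta> \<le> f a - f b"
  shows "h \<le> measure lborel {x\<in>{0..1}. \<gamma> < \<bar>f x - g x\<bar>}"
proof -
  define E where "E = {x\<in>{0..1}. \<gamma> < \<bar>f x - g x\<bar>}"
  have "E \<in> sets borel"
    unfolding E_def using holder_continuous_on[OF holder \<open>0 < \<beta>\<close>] \<open>mono_on {0..1} g\<close>
    by (intro sets_borel_deviation_gt) auto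
  then have E: "E \<in> fmeasurable lborel"
    by (intro fmeasurableI2[OF fmeasurable_cbox[of 0 1, unfolded cbox_interval]]) (auto simp: E_def)
  have "\<bar>f a - f b\<bar> \<le> L * \<bar>b - a\<bar> powr \<beta>"
    using holder[rule_format, of a b] assms(8-10) by (simp add: abs_minus_commute)
  then have "2 * h \<le> \<bar>b - a\<bar>"
    by (rule holder_drop_gap[OF \<open>0 < \<beta>\<close> \<open>\<beta> \<le> 1\<close> \<open>0 < L\<close> \<open>0 \<le> h\<close>])
       (use drop \<open>0 \<le> \<gamma>\<close> in linarith)
  then have gap: "2 * h \<le> b - a"
    using \<open>a < b\<close> by simp
  have near: "\<bar>f x - f y\<bar> < L * h powr \<beta>"
    if "x \<in> {0..1}" "y \<in> {0..1}" "\<bar>x - y\<bar> < h" for x y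
  proof -
    have "\<bar>x - y\<bar> powr \<beta> < h powr \<beta>"
      using that \<open>0 < \<beta>\<close> by (intro powr_less_mono2) auto
    then have "L * \<bar>x - y\<bar> powr \<beta> < L * h powr \<beta>"
      using \<open>0 < L\<close> by simp
    then show ?thesis
      using holder that by fastforce
  qed
  have covers: "\<forall>x\<in>{a<..<a+h}. x \<in> E \<or> x + (b - a - h) \<in> E"
  proof
    fix x assume x: "x \<in> {a<..<a+h}"
    define y where "y = x + (b - a - h)"
    have xy: "x \<in> {0..1}" "y \<in> {0..1}" "x \<le> y"
      using x gap assms(8-10) by (auto simp: y_def)
    have "f a - f x < L * h powr \<beta>" "f y - f b < L * h powr \<beta>"
      using near[of a x] near[of y b] x xy assms(8-10) by (auto simp: y_def)
    moreover have "g x \<le> g y"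
      using \<open>mono_on {0..1} g\<close> xy by (auto intro: mono_onD)
    ultimately have "\<gamma> < f x - g x \<or> \<gamma> < g y - f y"
      using drop by linarith
    then show "x \<in> E \<or> x + (b - a - h) \<in> E"
      using xy by (auto simp: E_def y_def)
  qed
  have "h \<le> measure lborel E"
    by (rule measure_ge_if_translate_covers[OF E _ covers]) (use gap in linarith)
  then show ?thesis
    by (simp add: E_def)
qed

lemma eps0_ge_if_Fclass:
  assumes "0 < \<beta>" "\<beta> \<le> 1" "0 < L" "0 \<le> \<gamma>" "0 \<le> h"
    and "f \<in> Fclass \<beta> L \<delta>" and "2 * \<gamma> + 2 * L * h powr \<beta> \<le> \<delta>"
  shows "h \<le> eps0 \<gamma> f"
proof -
  obtain a b where ab: "0 \<le> a" "a < b" "b \<le> 1" and "\<delta> \<le> f a - f b"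
    and holder: "\<forall>x\<in>{0..1}. \<forall>y\<in>{0..1}. \<bar>f x - f y\<bar> \<le> L * \<bar>x - y\<bar> powr \<beta>"
    using assms(2,6) by (auto simp: Fclass_def Hoelder_def)
  then have drop: "2 * \<gamma> + 2 * L * h powr \<beta> \<le> f a - f b"
    using assms(7) by linarith
  have "mono_on {0..1} (\<lambda>_::real. 0::real)"
    by (rule mono_onI) simp
  then have "{g. mono_on {0..1::real} (g :: real \<Rightarrow> real)} \<noteq> {}"
    by blast
  then show ?thesis
    unfolding eps0_def using measure_deviation_ge[OF assms(1-5) holder _ ab drop]
    by (intro cINF_greatest) auto
qed

lemma holder_sublevel_measure_ge:
  fixes u :: "real \<Rightarrow> real"
  assumes "0 < p" "0 \<le> L" "0 \<le> h" "h \<le> 1"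
    and holder: "\<forall>x\<in>{0..1}. \<forall>y\<in>{0..1}. \<bar>u x - u y\<bar> \<le> L * \<bar>x - y\<bar> powr p"
    and "x0 \<in> {0..1}" and "u x0 + L * h powr p \<le> c"
  shows "h \<le> measure lborel {x\<in>{0..1}. u x \<le> c}"
proof -
  define S where "S = {x\<in>{0..1}. u x \<le> c}"
  have "closed ({0..1} \<inter> u -` {..c})"
    using holder_continuous_on[OF holder \<open>0 < p\<close>] by (intro continuous_closed_preimage) auto
  moreover have "S = {0..1} \<inter> u -` {..c}"
    by (auto simp: S_def)
  ultimately have "S \<in> sets borel"
    by simp
  then have S: "S \<in> fmeasurable lborel"
    by (intro fmeasurableI2[OF fmeasurable_cbox[of 0 1, unfolded cbox_interval]]) (auto simp: S_def)
  define I where "I = {max 0 (x0 - h) .. min 1 (x0 + h)}"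
  have "I \<subseteq> S"
  proof
    fix x assume "x \<in> I"
    then have x: "x \<in> {0..1}" "\<bar>x - x0\<bar> \<le> h"
      by (auto simp: I_def)
    have "u x - u x0 \<le> L * \<bar>x - x0\<bar> powr p"
      using holder x \<open>x0 \<in> {0..1}\<close> by fastforce
    also have "\<dots> \<le> L * h powr p"
      using x \<open>0 < p\<close> \<open>0 \<le> L\<close> by (intro mult_left_mono powr_mono2) auto
    finally show "x \<in> S"
      using x \<open>u x0 + L * h powr p \<le> c\<close> by (simp add: S_def)
  qed
  have "h \<le> min 1 (x0 + h) - max 0 (x0 - h)"
    using \<open>0 \<le> h\<close> \<open>h \<le> 1\<close> \<open>x0 \<in> {0..1}\<close> unfolding min_def max_def by auto
  also have "\<dots> = measure lborel I"
    using \<open>0 \<le> h\<close> \<open>x0 \<in> {0..1}\<close> by (simp add: I_def)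
  also have "\<dots> \<le> measure lborel S"
    using \<open>I \<subseteq> S\<close> S by (intro measure_mono_fmeasurable) (auto simp: I_def)
  finally show ?thesis
    by (simp add: S_def)
qed

lemma eps1_ge_if_Fclass:
  assumes "1 < \<beta>" "0 \<le> L" "0 \<le> \<gamma>" "0 \<le> h" "h \<le> 1"
    and "f \<in> Fclass \<beta> L \<delta>" and "2 * \<gamma> + 2 * L * h powr (\<beta> - 1) \<le> \<delta>"
  shows "h \<le> eps1 \<gamma> f"
proof -
  obtain x0 where x0: "x0 \<in> {0..1}" and "dfun f x0 \<le> - \<delta>"
    and holder: "\<forall>x\<in>{0..1}. \<forall>y\<in>{0..1}. \<bar>dfun f x - dfun f y\<bar> \<le> L * \<bar>x - y\<bar> powr (\<beta> - 1)"
    using assms(1,6) by (auto simp: Fclass_def Hoelder_def)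
  moreover have "0 \<le> L * h powr (\<beta> - 1)"
    using assms(2) by simp
  ultimately have "dfun f x0 + L * h powr (\<beta> - 1) \<le> - \<gamma>"
    using assms(3,7) by linarith
  then show ?thesis
    unfolding eps1_def using assms(1-5)
    by (intro holder_sublevel_measure_ge[OF _ _ _ _ holder x0]) simp_all
qed

lemma kernel_constants_nonneg:
  assumes "kernel K Kmax LK"
  shows "0 \<le> Kmax" "0 \<le> LK"
proof -
  have "0 \<le> K 0" "K 0 \<le> Kmax" "\<bar>K 0 - K 1\<bar> \<le> LK * \<bar>0 - 1\<bar>"
    using assms unfolding kernel_def by blast+
  then show "0 \<le> Kmax" "0 \<le> LK"
    by (simp_all add: order_trans[OF abs_ge_zero])
qed

lemma Cbeta_nonneg:
  assumes "0 \<le> L" "0 \<le> \<sigma>" "kernel K Kmax LK"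
  shows "0 \<le> Cbeta \<beta> L \<sigma> K Kmax LK"
proof -
  have "0 \<le> L2 \<beta> Kmax LK"
    using kernel_constants_nonneg[OF assms(3)] by (simp add: L2_def)
  moreover have "0 \<le> Wc \<beta> Kmax LK"
    by (simp add: Wc_def le_max_iff_disj)
  moreover have "0 < lam0 \<beta>"
    by (simp add: lam0_def)
  ultimately show ?thesis
    using assms(1,2) unfolding Cbeta_def Let_def
    by (auto intro!: add_nonneg_nonneg mult_nonneg_nonneg divide_nonneg_pos)
qed

lemma Deltan_pos: "2 \<le> n \<Longrightarrow> 0 < Deltan \<beta> n"
  by (simp add: Deltan_def)

lemma alph_eq_if_le_1: "0 < \<beta> \<Longrightarrow> \<beta> \<le> 1 \<Longrightarrow> alph \<beta> = \<beta>"
  by (simp add: alph_def ceiling_eq_iff)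

lemma alph_eq_if_gt_1: "1 < \<beta> \<Longrightarrow> \<beta> \<le> 2 \<Longrightarrow> alph \<beta> = \<beta> - 1"
  by (simp add: alph_def ceiling_eq_iff)

theorem mainTheorem13:
  fixes \<beta> L \<sigma> Kmax LK C :: real and K :: "real \<Rightarrow> real" and n :: nat
  assumes "0 < \<beta>" "\<beta> \<le> 2" "0 < L" "0 < \<sigma>" "kernel K Kmax LK" "2 \<le> n"
    and "1 < \<beta> \<Longrightarrow> hn \<beta> L \<sigma> K Kmax n \<le> 1"
    and "C \<ge> (2 * gamman \<beta> L \<sigma> K Kmax LK n + 2 * L * hn \<beta> L \<sigma> K Kmax n powr alph \<beta>)
               / Deltan \<beta> n"
    and "f \<in> Fclass \<beta> L (C * Deltan \<beta> n)"
  shows "epsb \<beta> (gamman \<beta> L \<sigma> K Kmax LK n) f \<ge> hn \<beta> L \<sigma> K Kmax n"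
proof -
  define h where "h = hn \<beta> L \<sigma> K Kmax n"
  define \<gamma> where "\<gamma> = gamman \<beta> L \<sigma> K Kmax LK n"
  have "0 \<le> h"
    by (simp add: h_def hn_def Ch_def)
  have "0 \<le> \<gamma>"
    using Cbeta_nonneg[OF _ _ assms(5), of L \<sigma> \<beta>] assms(3,4) by (simp add: \<gamma>_def gamman_def)
  have drop: "2 * \<gamma> + 2 * L * h powr alph \<beta> \<le> C * Deltan \<beta> n"
    using assms(8) Deltan_pos[OF assms(6)] by (simp add: \<gamma>_def h_def pos_divide_le_eq)
  show ?thesis
  proof (cases "\<beta> \<le> 1")
    case True
    then have "h \<le> eps0 \<gamma> f"
      using drop alph_eq_if_le_1[OF assms(1)] assms(1,3,9) \<open>0 \<le> \<gamma>\<close> \<open>0 \<le> h\<close>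
      by (intro eps0_ge_if_Fclass) simp_all
    then show ?thesis
      using True by (simp add: epsb_def h_def \<gamma>_def)
  next
    case False
    then have "h \<le> eps1 \<gamma> f"
      using drop alph_eq_if_gt_1[OF _ assms(2)] assms(3,7,9) \<open>0 \<le> \<gamma>\<close> \<open>0 \<le> h\<close>
      by (intro eps1_ge_if_Fclass) (simp_all add: h_def)
    then show ?thesis
      using False by (simp add: epsb_def h_def \<gamma>_def)
  qed
qed

end
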